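(* Let $X$ be a Polish space, $\mathbf f=(f_n)_n$ a sequence of continuous real-valued functions on $X$ which is relatively compact in $\mathcal B_1(X)$, and $f$ a continuous function belonging to the pointwise closure of $\{f_n\}$. Then for every $L\in[\mathbb N]$: $L\in\mathcal L_{\mathbf f,f}$ if and only if the tree $S_L$ is well-founded.
   Context: $\mathcal B_1(X)$ is the set of real-valued Baire-1 functions on $X$; $(f_n)_n$ is relatively compact in $\mathcal B_1(X)$ if the closure of $\{f_n\}$ in $\mathbb R^X$ is compact and contained in $\mathcal B_1(X)$. $[\mathbb N]$ is the set of infinite subsets of $\mathbb N$; $\mathcal L_{\mathbf f,f}=\{L\in[\mathbb N]:(f_n)_{n\in L}\to f\text{ pointwise}\}$. Fix a compatible complete metric on $X$, a countable dense $D\subseteq X$ and an enumeration $(B_n)_n$ of all closed balls with centers in $D$ and rational radii. A finite sequence $w=(l_0,\dots,l_k)$ is acceptable if $B_{l_0}\supseteq\dots\supseteq B_{l_k}$ and $\mathrm{diam}(B_{l_i})\le\frac1{i+1}$ for all $i$; the empty sequence is acceptable. A tree on $\mathbb N\times\mathbb N$ is identified with a set of pairs $(s,w)$ of finite sequences of equal length closed under initial segments; well-founded means no infinite branch. For $d\in\mathbb N$, $S^d_L$ is the set of $(s,w)$ with $|s|=|w|=k$, $s=(n_0<\dots<n_{k-1})$ with $n_i\in L$, $w=(l_0,\dots,l_{k-1})$ acceptable, and $|f_{n_i}(z)-f(z)|>\frac1{d+1}$ for all $i<k$ and $z\in B_{l_i}$. $S_L$ consists of the empty pair together with all $(d^\frown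 s',d^\frown w')$ with $d\in\mathbb N$ and $(s',w')\in S^d_L$. *)

theory Defs
  imports "HOL-Analysis.Analysis"
begin

definition baire1 :: "('a::topological_space \<Rightarrow> real) \<Rightarrow> bool" where
  "baire1 g \<longleftrightarrow> (\<exists>h :: nat \<Rightarrow> 'a \<Rightarrow> real. (\<forall>n. continuous_on UNIV (h n))
                      \<and> (\<forall>x. (\<lambda>n. h n x) \<longlonglongrightarrow> g x))"

definition conv_sets :: "(nat \<Rightarrow> 'a \<Rightarrow> real) \<Rightarrow> ('a \<Rightarrow> real) \<Rightarrow> nat set set" where
  "conv_sets fs f = {L. infinite L \<and> (\<forall>x. (\<lambda>k. fs (enumerate L k) x) \<longlonglongrightarrow> f x)}"

definition acceptable :: "(nat \<Rightarrow> 'a::metric_space set) \<Rightarrow> nat list \<Rightarrow> bool" where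
  "acceptable B w \<longleftrightarrow>
     (\<forall>i. Suc i < length w \<longrightarrow> B (w ! Suc i) \<subseteq> B (w ! i)) \<and>
     (\<forall>i < length w. diameter (B (w ! i)) \<le> 1 / (real i + 1))"

definition S_d :: "(nat \<Rightarrow> 'a::metric_space \<Rightarrow> real) \<Rightarrow> ('a \<Rightarrow> real) \<Rightarrow> (nat \<Rightarrow> 'a set)
                   \<Rightarrow> nat set \<Rightarrow> nat \<Rightarrow> (nat list \<times> nat list) set" where
  "S_d fs f B L d = {(s, w). length s = length w \<and> sorted_wrt (<) s \<and> set s \<subseteq> L \<and>
      acceptable B w \<and>
      (\<forall>i < length s. \<forall>z \<in> B (w ! i). \<bar>fs (s ! i) z - f z\<bar> > 1 / (real d + 1))}"

definition S_tree :: "(nat \<Rightarrow> 'a::metric_space \<Rightarrow> real) \<Rightarrow> ('a \<Rightarrow> real) \<Rightarrow> (nat \<Rightarrow> 'a set)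
                   \<Rightarrow> nat set \<Rightarrow> (nat list \<times> nat list) set" where
  "S_tree fs f B L = {([], [])} \<union> {(d # s', d # w') | d s' w'. (s', w') \<in> S_d fs f B L d}"

definition wf_tree :: "(nat list \<times> nat list) set \<Rightarrow> bool" where
  "wf_tree T \<longleftrightarrow> \<not> (\<exists>\<sigma> \<omega> :: nat \<Rightarrow> nat. \<forall>k. (map \<sigma> [0..<k], map \<omega> [0..<k]) \<in> T)"

end

theory Submission
  imports Defs
begin

(* The tree S_L is the disjoint union over d of the trees S^d_L, so S_L has an
   infinite branch iff some S^d_L has one, i.e. iff there are d, a strictly increasing
   sequence (s_i) in L and a nested sequence of balls B_{w_i} with diam B_{w_i} <= 1/(i+1)
   such that |f_{s_i} - f| > 1/(d+1) on B_{w_i}.  On the other side, (f_n)_{n in L} converges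
   pointwise to f iff for every x and d only finitely many n in L satisfy
   |f_n x - f x| > 1/(d+1).
   - If such a branch exists, the nested balls shrink to a common point a (completeness), and
     infinitely many n = s_i in L deviate at a, so L is not a convergence set.
   - If L is not a convergence set, pick x, d with infinitely many deviating n in L, list them
     increasingly as (s_i), and use continuity of f_{s_i} - f to choose nested small rational
     balls around x on which the deviation persists; this is an infinite branch. *)

section \<open>Convergence along an infinite set of indices\<close>

lemma reciprocal_Suc_less:
  fixes \<epsilon> :: real
  assumes "\<epsilon> > 0"
  obtains n :: nat where "1 / (real n + 1) < \<epsilon>"
  using nat_approx_posE[OF assms] that by (metis of_nat_Suc add.commute)

lemma enumerate_tendsto_iff_finite_deviations:
  fixes g :: "nat \<Rightarrow> real"
  assumes L: "infinite L"
  shows "(\<lambda>k. g (enumerate L k)) \<longlonglongrightarrow> c \<longleftrightarrow> (\<forall>\<epsilon>>0. finite {n \<in> L. \<epsilon> < \<bar>g n - c\<bar>})"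
proof
  assume lim: "(\<lambda>k. g (enumerate L k)) \<longlonglongrightarrow> c"
  show "\<forall>\<epsilon>>0. finite {n \<in> L. \<epsilon> < \<bar>g n - c\<bar>}"
  proof (intro allI impI)
    fix \<epsilon> :: real assume "\<epsilon> > 0"
    then obtain K where K: "\<And>k. k \<ge> K \<Longrightarrow> \<bar>g (enumerate L k) - c\<bar> < \<epsilon>"
      using lim by (auto simp: tendsto_iff eventually_sequentially dist_real_def)
    have "{n \<in> L. \<epsilon> < \<bar>g n - c\<bar>} \<subseteq> enumerate L ` {..<K}"
    proof
      fix n assume n: "n \<in> {n \<in> L. \<epsilon> < \<bar>g n - c\<bar>}"
      then obtain k where k: "n = enumerate L k"
        using range_enumerate[OF L] by blast
      then have "k < K" using K[of k] n by force
      then show "n \<in> enumerate L ` {..<K}" using k by blast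
    qed
    then show "finite {n \<in> L. \<epsilon> < \<bar>g n - c\<bar>}"
      using finite_subset by blast
  qed
next
  assume fin: "\<forall>\<epsilon>>0. finite {n \<in> L. \<epsilon> < \<bar>g n - c\<bar>}"
  show "(\<lambda>k. g (enumerate L k)) \<longlonglongrightarrow> c"
    unfolding tendsto_iff eventually_sequentially dist_real_def
  proof (intro allI impI)
    fix \<epsilon> :: real assume "\<epsilon> > 0"
    then obtain K where K: "{n \<in> L. \<epsilon>/2 < \<bar>g n - c\<bar>} \<subseteq> {..<K}"
      using fin finite_nat_bounded by (meson half_gt_zero)
    have "\<bar>g (enumerate L k) - c\<bar> < \<epsilon>" if "k \<ge> K" for k
    proof -
      have "enumerate L k \<ge> K" using le_enumerate[OF L, of k] that by linarith
      then have "\<bar>g (enumerate L k) - c\<bar> \<le> \<epsilon>/2"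
        using K enumerate_in_set[OF L, of k] by force
      then show ?thesis using \<open>\<epsilon> > 0\<close> by linarith
    qed
    then show "\<exists>K. \<forall>k\<ge>K. \<bar>g (enumerate L k) - c\<bar> < \<epsilon>" by blast
  qed
qed

lemma conv_sets_iff_finite_deviations:
  assumes L: "infinite L"
  shows "L \<in> conv_sets fs f \<longleftrightarrow>
         (\<forall>x d. finite {n \<in> L. 1 / (real d + 1) < \<bar>fs n x - f x\<bar>})"
proof -
  have "finite {n \<in> L. \<epsilon> < \<bar>fs n x - f x\<bar>}"
    if fin: "\<forall>d. finite {n \<in> L. 1 / (real d + 1) < \<bar>fs n x - f x\<bar>}" and "\<epsilon> > 0"
    for x and \<epsilon> :: real
  proof -
    obtain d where d: "1 / (real d + 1) < \<epsilon>"
      using reciprocal_Suc_less[OF \<open>\<epsilon> > 0\<close>] .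
    have "{n \<in> L. \<epsilon> < \<bar>fs n x - f x\<bar>} \<subseteq> {n \<in> L. 1 / (real d + 1) < \<bar>fs n x - f x\<bar>}"
      using d by auto
    then show ?thesis using fin finite_subset by blast
  qed
  moreover have "(\<lambda>k. fs (enumerate L k) x) \<longlonglongrightarrow> f x \<longleftrightarrow>
      (\<forall>\<epsilon>>0. finite {n \<in> L. \<epsilon> < \<bar>fs n x - f x\<bar>})" for x
    using enumerate_tendsto_iff_finite_deviations[OF L, of "\<lambda>n. fs n x"] by simp
  ultimately show ?thesis
    using L by (auto simp: conv_sets_def)
qed

section \<open>Branches of the trees\<close>

lemma map_upt_Suc_Cons: "map \<sigma> [0..<Suc m] = \<sigma> 0 # map (\<lambda>i. \<sigma> (Suc i)) [0..<m]"
  by (induct m) auto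

lemma wf_S_tree_iff:
  "wf_tree (S_tree fs f B L) \<longleftrightarrow>
   \<not> (\<exists>d s w. \<forall>m. (map s [0..<m], map w [0..<m]) \<in> S_d fs f B L d)"
proof
  assume wf: "wf_tree (S_tree fs f B L)"
  show "\<not> (\<exists>d s w. \<forall>m. (map s [0..<m], map w [0..<m]) \<in> S_d fs f B L d)"
  proof
    assume "\<exists>d s w. \<forall>m. (map s [0..<m], map w [0..<m]) \<in> S_d fs f B L d"
    then obtain d s w where br: "\<forall>m. (map s [0..<m], map w [0..<m]) \<in> S_d fs f B L d"
      by blast
    have "(map (case_nat d s) [0..<k], map (case_nat d w) [0..<k]) \<in> S_tree fs f B L" for k
      using br by (cases k) (auto simp del: upt_Suc simp: S_tree_def map_upt_Suc_Cons)
    then show False using wf unfolding wf_tree_def by blast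
  qed
next
  assume none: "\<not> (\<exists>d s w. \<forall>m. (map s [0..<m], map w [0..<m]) \<in> S_d fs f B L d)"
  show "wf_tree (S_tree fs f B L)" unfolding wf_tree_def
  proof
    assume "\<exists>\<sigma> \<omega>. \<forall>k. (map \<sigma> [0..<k], map \<omega> [0..<k]) \<in> S_tree fs f B L"
    then obtain \<sigma> \<omega> where br: "\<And>k. (map \<sigma> [0..<k], map \<omega> [0..<k]) \<in> S_tree fs f B L"
      by blast
    have "(map (\<lambda>i. \<sigma> (Suc i)) [0..<m], map (\<lambda>i. \<omega> (Suc i)) [0..<m]) \<in> S_d fs f B L (\<sigma> 0)"
      for m
      using br[of "Suc m"] unfolding map_upt_Suc_Cons by (auto simp: S_tree_def)
    then show False using none by blast
  qed
qed

definition deviation_branch ::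
  "(nat \<Rightarrow> 'a::metric_space \<Rightarrow> real) \<Rightarrow> ('a \<Rightarrow> real) \<Rightarrow> (nat \<Rightarrow> 'a set) \<Rightarrow> nat set \<Rightarrow> nat
   \<Rightarrow> (nat \<Rightarrow> nat) \<Rightarrow> (nat \<Rightarrow> nat) \<Rightarrow> bool" where
  "deviation_branch fs f B L d s w \<longleftrightarrow>
     strict_mono s \<and> range s \<subseteq> L \<and> decseq (\<lambda>i. B (w i)) \<and>
     (\<forall>i. diameter (B (w i)) \<le> 1 / (real i + 1)) \<and>
     (\<forall>i. \<forall>z \<in> B (w i). 1 / (real d + 1) < \<bar>fs (s i) z - f z\<bar>)"

lemma S_d_branch_iff:
  "(\<forall>m. (map s [0..<m], map w [0..<m]) \<in> S_d fs f B L d) \<longleftrightarrow> deviation_branch fs f B L d s w"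
proof
  assume br: "\<forall>m. (map s [0..<m], map w [0..<m]) \<in> S_d fs f B L d"
  have prefix: "sorted_wrt (<) (map s [0..<m]) \<and> set (map s [0..<m]) \<subseteq> L \<and>
      acceptable B (map w [0..<m]) \<and>
      (\<forall>i < m. \<forall>z \<in> B (w i). 1 / (real d + 1) < \<bar>fs (s i) z - f z\<bar>)" for m
    using br unfolding S_d_def by (auto simp del: upt_Suc)
  have "s i < s (Suc i)" for i
    using prefix[of "Suc (Suc i)"] by (simp del: upt_Suc add: sorted_wrt_iff_nth_less)
  moreover have "B (w (Suc i)) \<subseteq> B (w i)" for i
    using prefix[of "Suc (Suc i)"] by (simp del: upt_Suc add: acceptable_def)
  moreover have "diameter (B (w i)) \<le> 1 / (real i + 1)" for i
    using prefix[of "Suc i"] by (simp del: upt_Suc add: acceptable_def)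
  moreover have "s i \<in> L" for i
    using prefix[of "Suc i"] by auto
  moreover have "\<forall>z \<in> B (w i). 1 / (real d + 1) < \<bar>fs (s i) z - f z\<bar>" for i
    using prefix[of "Suc i"] by auto
  ultimately show "deviation_branch fs f B L d s w"
    by (auto simp: deviation_branch_def strict_mono_Suc_iff decseq_Suc_iff)
next
  assume "deviation_branch fs f B L d s w"
  then show "\<forall>m. (map s [0..<m], map w [0..<m]) \<in> S_d fs f B L d"
    by (auto simp: deviation_branch_def S_d_def acceptable_def sorted_wrt_iff_nth_less
        strict_mono_less decseq_Suc_iff)
qed

section \<open>Rational balls\<close>

lemma diameter_cball_le:
  fixes c :: "'a::metric_space"
  assumes "0 \<le> r"
  shows "diameter (cball c r) \<le> 2 * r"
proof -
  have "dist x y \<le> 2 * r" if "x \<in> cball c r" "y \<in> cball c r" for x y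
    using that dist_triangle[of x y c] by (auto simp: dist_commute[of x c])
  moreover have "cball c r \<noteq> {}" using assms by auto
  ultimately show ?thesis
    unfolding diameter_def by (auto intro!: cSUP_least)
qed

lemma rational_ball_family:
  fixes B :: "nat \<Rightarrow> 'a::metric_space set"
  assumes B: "range B = {cball x (real_of_rat r) | x r. x \<in> D \<and> r > 0}"
  shows "closed (B j)" "bounded (B j)" "B j \<noteq> {}"
proof -
  have "B j \<in> range B" by simp
  then obtain c r where "B j = cball c (real_of_rat r)" "r > 0" unfolding B by blast
  then show "closed (B j)" "bounded (B j)" "B j \<noteq> {}" by auto
qed

lemma small_rational_ball:
  fixes B :: "nat \<Rightarrow> 'a::metric_space set"
  assumes B: "range B = {cball x (real_of_rat r) | x r. x \<in> D \<and> r > 0}"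
    and D: "closure D = UNIV" and V: "open V" "x \<in> V" and e: "e > 0"
  obtains j where "x \<in> interior (B j)" "B j \<subseteq> V" "diameter (B j) \<le> e"
proof -
  obtain \<rho> where \<rho>: "\<rho> > 0" "ball x \<rho> \<subseteq> V" using V open_contains_ball by blast
  obtain r where r: "r \<in> \<rat>" "0 < r" "r < min (\<rho>/2) (e/2)"
    using Rats_dense_in_real[of 0 "min (\<rho>/2) (e/2)"] \<rho> e by auto
  then obtain q where q: "r = real_of_rat q" by (auto simp: Rats_def)
  obtain c where c: "c \<in> D" "dist c x < r"
    using D r(2) closure_approachable[of x D] by auto
  have "cball c r \<in> range B" unfolding B q using c q r(2) by auto
  then obtain j where j: "B j = cball c r" by auto
  have "x \<in> ball c r" using c by (simp add: dist_commute)
  moreover have "ball c r \<subseteq> interior (B j)"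
    unfolding j by (rule interior_maximal) auto
  ultimately have "x \<in> interior (B j)" by blast
  moreover have "B j \<subseteq> V"
  proof
    fix z assume "z \<in> B j"
    then have "dist x z < 2 * r"
      using c dist_triangle[of x z c] by (auto simp: j dist_commute[of x c])
    then show "z \<in> V" using \<rho> r by auto
  qed
  moreover have "diameter (B j) \<le> e"
    using diameter_cball_le[of r c] r by (simp add: j)
  ultimately show ?thesis using that by blast
qed

lemma nested_rational_balls:
  fixes B :: "nat \<Rightarrow> 'a::metric_space set"
  assumes B: "range B = {cball x (real_of_rat r) | x r. x \<in> D \<and> r > 0}"
    and D: "closure D = UNIV" and U: "\<And>i. open (U i)" "\<And>i. x \<in> U i"
  obtains w where "decseq (\<lambda>i. B (w i))" "\<And>i. diameter (B (w i)) \<le> 1 / (real i + 1)"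
    "\<And>i. B (w i) \<subseteq> U i"
proof -
  define P where "P i j \<longleftrightarrow> x \<in> interior (B j) \<and> B j \<subseteq> U i \<and> diameter (B j) \<le> 1 / (real i + 1)"
    for i j
  have "\<exists>j'. P (Suc i) j' \<and> B j' \<subseteq> B j" if "P i j" for i j
  proof -
    have "open (U (Suc i) \<inter> interior (B j))" "x \<in> U (Suc i) \<inter> interior (B j)"
      using U that by (auto simp: P_def)
    from small_rational_ball[OF B D this, of "1 / (real (Suc i) + 1)"]
    obtain j' where "x \<in> interior (B j')" "B j' \<subseteq> U (Suc i) \<inter> interior (B j)"
      "diameter (B j') \<le> 1 / (real (Suc i) + 1)"
      by auto
    then show ?thesis using interior_subset[of "B j"] unfolding P_def by blast
  qed
  moreover obtain j0 where "x \<in> interior (B j0)" "B j0 \<subseteq> U 0" "diameter (B j0) \<le> 1"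
    using small_rational_ball[OF B D U(1,2), of 1] by auto
  then have "\<exists>j. P 0 j" unfolding P_def by auto
  ultimately obtain w where "\<forall>i. P i (w i) \<and> B (w (Suc i)) \<subseteq> B (w i)"
    using dependent_nat_choice[of P "\<lambda>_ j j'. B j' \<subseteq> B j"] by blast
  then show ?thesis using that[of w] by (simp add: P_def decseq_Suc_iff)
qed

lemma deviation_branch_infinite_deviation:
  fixes B :: "nat \<Rightarrow> 'a::complete_space set"
  assumes B: "range B = {cball x (real_of_rat r) | x r. x \<in> D \<and> r > 0}"
    and br: "deviation_branch fs f B L d s w"
  shows "\<exists>a. infinite {n \<in> L. 1 / (real d + 1) < \<bar>fs n a - f a\<bar>}"
proof -
  have shrink: "\<exists>n. \<forall>x\<in>B (w n). \<forall>y\<in>B (w n). dist x y < \<epsilon>" if "\<epsilon> > 0" for \<epsilon> :: real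
  proof -
    obtain n where n: "1 / (real n + 1) < \<epsilon>"
      using reciprocal_Suc_less[OF \<open>\<epsilon> > 0\<close>] .
    have "diameter (B (w n)) \<le> 1 / (real n + 1)"
      using br by (simp add: deviation_branch_def)
    then have "dist x y < \<epsilon>" if "x \<in> B (w n)" "y \<in> B (w n)" for x y
      using diameter_bounded_bound[OF rational_ball_family(2)[OF B] that] n by linarith
    then show ?thesis by blast
  qed
  obtain a where a: "\<And>i. a \<in> B (w i)"
    using decreasing_closed_nest[of "\<lambda>i. B (w i)"] rational_ball_family[OF B] br shrink
    by (auto simp: deviation_branch_def decseq_def)
  have "range s \<subseteq> {n \<in> L. 1 / (real d + 1) < \<bar>fs n a - f a\<bar>}"
    using br a by (auto simp: deviation_branch_def)
  moreover have "infinite (range s)"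
    using br by (auto simp: deviation_branch_def dest: strict_mono_imp_inj_on finite_imageD)
  ultimately show ?thesis using finite_subset by blast
qed

text \<open>Conversely, infinitely many deviations at a point x produce an infinite branch, by
  continuity of f_n - f.\<close>
lemma infinite_deviation_deviation_branch:
  fixes B :: "nat \<Rightarrow> 'a::metric_space set"
  assumes B: "range B = {cball x (real_of_rat r) | x r. x \<in> D \<and> r > 0}"
    and D: "closure D = UNIV"
    and cont: "\<And>n. continuous_on UNIV (fs n)" and f_cont: "continuous_on UNIV f"
    and dev: "infinite {n \<in> L. 1 / (real d + 1) < \<bar>fs n x - f x\<bar>}"
  shows "\<exists>s w. deviation_branch fs f B L d s w"
proof -
  define M where "M = {n \<in> L. 1 / (real d + 1) < \<bar>fs n x - f x\<bar>}"
  have M: "infinite M" using dev by (simp add: M_def)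
  define s where "s = enumerate M"
  define U where "U i = {z. 1 / (real d + 1) < \<bar>fs (s i) z - f z\<bar>}" for i
  have sM: "s i \<in> M" for i unfolding s_def using enumerate_in_set[OF M] .
  have U_open: "open (U i)" for i
    unfolding U_def by (intro open_Collect_less continuous_intros cont f_cont)
  have x_in_U: "x \<in> U i" for i using sM[of i] by (simp add: U_def M_def)
  obtain w where w: "decseq (\<lambda>i. B (w i))"
    "\<And>i. diameter (B (w i)) \<le> 1 / (real i + 1)" "\<And>i. B (w i) \<subseteq> U i"
    using nested_rational_balls[where U = U and x = x, OF B D U_open x_in_U] by blast
  have "strict_mono s" unfolding s_def using M by (simp add: strict_mono_def enumerate_mono)
  moreover have "range s \<subseteq> L" using sM by (auto simp: M_def)
  moreover have "\<forall>z \<in> B (w i). 1 / (real d + 1) < \<bar>fs (s i) z - f z\<bar>" for i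
    using w(3)[of i] by (auto simp: U_def)
  ultimately have "deviation_branch fs f B L d s w"
    using w(1,2) by (simp add: deviation_branch_def)
  then show ?thesis by blast
qed

theorem lemma5p12:
  fixes fs :: "nat \<Rightarrow> 'a::polish_space \<Rightarrow> real"
    and f :: "'a \<Rightarrow> real"
    and D :: "'a set"
    and B :: "nat \<Rightarrow> 'a set"
    and L :: "nat set"
  assumes cont: "\<And>n. continuous_on UNIV (fs n)"
    and relcomp: "compact (closure (range fs))" "closure (range fs) \<subseteq> {g. baire1 g}"
    and f_cont: "continuous_on UNIV f"
    and f_cl: "f \<in> closure (range fs)"
    and D: "countable D" "closure D = UNIV"
    and B: "range B = {cball x (real_of_rat r) | x r. x \<in> D \<and> r > 0}"
    and L: "infinite L"
  shows "L \<in> conv_sets fs f \<longleftrightarrow> wf_tree (S_tree fs f B L)"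
proof -
  have "(\<exists>d s w. deviation_branch fs f B L d s w) \<longleftrightarrow>
        (\<exists>x d. infinite {n \<in> L. 1 / (real d + 1) < \<bar>fs n x - f x\<bar>})"
  proof
    assume "\<exists>d s w. deviation_branch fs f B L d s w"
    then show "\<exists>x d. infinite {n \<in> L. 1 / (real d + 1) < \<bar>fs n x - f x\<bar>}"
      using deviation_branch_infinite_deviation[OF B] by blast
  next
    assume "\<exists>x d. infinite {n \<in> L. 1 / (real d + 1) < \<bar>fs n x - f x\<bar>}"
    then obtain x d where "infinite {n \<in> L. 1 / (real d + 1) < \<bar>fs n x - f x\<bar>}"
      by blast
    then show "\<exists>d s w. deviation_branch fs f B L d s w"
      using infinite_deviation_deviation_branch[where fs = fs, OF B D(2) cont f_cont] by blast
  qed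
  then show ?thesis
    unfolding conv_sets_iff_finite_deviations[OF L] wf_S_tree_iff S_d_branch_iff by blast
qed

end
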